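(* An element $r\in\widetilde{\mathbb{K}}_{sm}$ is non-invertible if and only if it is a zero divisor (i.e., there exists $s\in\widetilde{\mathbb{K}}_{sm}$, $s\neq0$, with $rs=0$).
   Context: Let $I=(0,1]$ and $\mathbb{K}\in\{\mathbb{R},\mathbb{C}\}$. $\mathcal{E}_{M,sm}$ is the set of nets $(r_\varepsilon)_{\varepsilon\in I}\in\mathbb{K}^I$ with $\varepsilon\mapsto r_\varepsilon$ smooth on $I$ and $|r_\varepsilon|=O(\varepsilon^{-N})$ as $\varepsilon\to0$ for some $N\in\mathbb{N}$; $\mathcal{N}_{sm}$ is the set of smooth nets with $|r_\varepsilon|=O(\varepsilon^m)$ for all $m\in\mathbb{N}$; $\widetilde{\mathbb{K}}_{sm}=\mathcal{E}_{M,sm}/\mathcal{N}_{sm}$, a commutative ring with componentwise operations. *)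

theory Defs
  imports "HOL-Analysis.Analysis"
begin

text \<open>Index set I = (0,1]. Nets are modelled as functions real => K; only values on I matter.\<close>

definition Iset :: "real set" where "Iset = {0<..1}"

text \<open>Smoothness (C-infinity) of a K-valued net on I: there is a sequence of successive
  derivatives (one-sided at the endpoint 1, i.e. derivatives within I).\<close>
definition smooth_net :: "(real \<Rightarrow> 'a::real_normed_vector) \<Rightarrow> bool" where
  "smooth_net r \<longleftrightarrow> (\<exists>D :: nat \<Rightarrow> real \<Rightarrow> 'a. D 0 = r \<and>
      (\<forall>n. \<forall>t\<in>Iset. (D n has_vector_derivative D (Suc n) t) (at t within Iset)))"

definition EM_sm :: "(real \<Rightarrow> 'a::real_normed_vector) set" where
  "EM_sm = {r. smooth_net r \<and> (\<exists>N::nat. \<exists>C e0. e0 > 0 \<and>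
      (\<forall>e. 0 < e \<and> e \<le> e0 \<longrightarrow> norm (r e) \<le> C * (1 / e) ^ N))}"

definition N_sm :: "(real \<Rightarrow> 'a::real_normed_vector) set" where
  "N_sm = {r. smooth_net r \<and> (\<forall>m::nat. \<exists>C e0. e0 > 0 \<and>
      (\<forall>e. 0 < e \<and> e \<le> e0 \<longrightarrow> norm (r e) \<le> C * e ^ m))}"

text \<open>For a representative r of an element of K~_sm = E_{M,sm}/N_{sm}:
  invertibility (exists s with r s = 1 in the quotient) and being a zero divisor
  (exists s, s <> 0 in the quotient, with r s = 0 in the quotient).\<close>
definition invertible_sm :: "(real \<Rightarrow> 'a::real_normed_field) \<Rightarrow> bool" where
  "invertible_sm r \<longleftrightarrow> (\<exists>s\<in>EM_sm. (\<lambda>e. r e * s e - 1) \<in> N_sm)"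

definition zero_divisor_sm :: "(real \<Rightarrow> 'a::real_normed_field) \<Rightarrow> bool" where
  "zero_divisor_sm r \<longleftrightarrow> (\<exists>s\<in>EM_sm. s \<notin> N_sm \<and> (\<lambda>e. r e * s e) \<in> N_sm)"

end

theory Submission
  imports Defs "HOL-Computational_Algebra.Polynomial"
begin

text \<open>
  If \<open>\<bar>r\<^sub>\<epsilon>\<bar> \<ge> \<epsilon>\<^sup>m\<close> for all small \<open>\<epsilon>\<close>, then
  \<open>s\<^sub>\<epsilon> = conj r\<^sub>\<epsilon> / (\<bar>r\<^sub>\<epsilon>\<bar>\<^sup>2 + exp (-1/\<epsilon>))\<close> is smooth and moderate, and \<open>r s - 1\<close> is
  negligible because \<open>exp (-1/\<epsilon>)\<close> is; so \<open>r\<close> is invertible. Otherwise, for every \<open>k\<close> there are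
  arbitrarily small \<open>\<epsilon>\<close> with \<open>\<bar>r\<^sub>\<epsilon>\<bar> < \<epsilon>\<^sup>k\<close>, and by continuity one finds disjoint intervals
  \<open>J\<^sub>k\<close> shrinking to \<open>0\<close> on which \<open>\<bar>r\<bar> < \<epsilon>\<^sup>k\<close>. A sum of smooth bumps supported in the
  \<open>J\<^sub>k\<close> is a bounded smooth net \<open>s\<close> that is not negligible (it equals \<open>exp (-2)\<close> at the
  centres of the \<open>J\<^sub>k\<close>), while \<open>r s\<close> is negligible. An invertible element is never a zero
  divisor, since \<open>s = s' (r s) - s (r s' - 1)\<close>.
\<close>

section \<open>Smooth functions on subsets of the real line\<close>

definition no_isolated_points :: "real set \<Rightarrow> bool" where
  "no_isolated_points S \<longleftrightarrow> (\<forall>t\<in>S. at t within S \<noteq> bot)"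

definition vderiv_on :: "real set \<Rightarrow> (real \<Rightarrow> 'a::real_normed_vector) \<Rightarrow> real \<Rightarrow> 'a" where
  "vderiv_on S f t = vector_derivative f (at t within S)"

fun times_differentiable_on :: "nat \<Rightarrow> real set \<Rightarrow> (real \<Rightarrow> 'a::real_normed_vector) \<Rightarrow> bool" where
  "times_differentiable_on 0 S f \<longleftrightarrow> True"
| "times_differentiable_on (Suc n) S f \<longleftrightarrow>
     (\<forall>t\<in>S. f differentiable (at t within S)) \<and> times_differentiable_on n S (vderiv_on S f)"

declare times_differentiable_on.simps(2) [simp del]

definition smooth_on :: "real set \<Rightarrow> (real \<Rightarrow> 'a::real_normed_vector) \<Rightarrow> bool" where
  "smooth_on S f \<longleftrightarrow> (\<forall>n. times_differentiable_on n S f)"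

lemma no_isolated_points_UNIV: "no_isolated_points UNIV"
  by (simp add: no_isolated_points_def)

lemma no_isolated_points_Iset: "no_isolated_points Iset"
  unfolding no_isolated_points_def Iset_def
proof
  fix t :: real assume t: "t \<in> {0<..1}"
  show "at t within {0<..1} \<noteq> bot"
    unfolding not_trivial_limit_within_ball
  proof (intro allI impI)
    fix e :: real assume "e > 0"
    then have "max (t/2) (t - e/2) \<in> {0<..1} \<inter> ball t e - {t}"
      using t by (auto simp: dist_real_def)
    then show "{0<..1} \<inter> ball t e - {t} \<noteq> {}" by blast
  qed
qed

lemma has_vector_derivative_vderiv_on:
  "times_differentiable_on (Suc n) S f \<Longrightarrow> t \<in> S \<Longrightarrow>
     (f has_vector_derivative vderiv_on S f t) (at t within S)"
  by (simp add: times_differentiable_on.simps(2) vderiv_on_def vector_derivative_works)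

lemma vderiv_on_eqI:
  "no_isolated_points S \<Longrightarrow> t \<in> S \<Longrightarrow> (f has_vector_derivative f') (at t within S) \<Longrightarrow>
     vderiv_on S f t = f'"
  unfolding vderiv_on_def no_isolated_points_def by (simp add: vector_derivative_within)

lemma times_differentiable_on_cong:
  assumes "\<And>t. t \<in> S \<Longrightarrow> f t = g t"
  shows "times_differentiable_on n S f = times_differentiable_on n S g"
  using assms
proof (induction n arbitrary: f g)
  case 0
  then show ?case by simp
next
  case (Suc n)
  have diff: "f differentiable (at t within S) \<longleftrightarrow> g differentiable (at t within S)" if "t \<in> S" for t
    using Suc.prems that by (metis differentiableI_vector has_vector_derivative_transform vector_derivative_works)
  have "vderiv_on S f t = vderiv_on S g t" if "t \<in> S" for t
    unfolding vderiv_on_def using Suc.prems that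
    by (intro vector_derivative_cong_eq) (auto intro: always_eventually)
  then have "times_differentiable_on n S (vderiv_on S f) = times_differentiable_on n S (vderiv_on S g)"
    by (rule Suc.IH)
  then show ?case using diff by (simp add: times_differentiable_on.simps(2))
qed

lemma times_differentiable_on_SucI:
  assumes "no_isolated_points S"
    and "\<And>t. t \<in> S \<Longrightarrow> (f has_vector_derivative f' t) (at t within S)"
    and "times_differentiable_on n S f'"
  shows "times_differentiable_on (Suc n) S f"
proof -
  have "times_differentiable_on n S (vderiv_on S f)"
    using assms by (subst times_differentiable_on_cong[where g = f']) (auto intro: vderiv_on_eqI)
  then show ?thesis
    using assms(2) by (auto simp: times_differentiable_on.simps(2) intro: differentiableI_vector)
qed

lemma times_differentiable_on_Suc_D:
  "times_differentiable_on (Suc n) S f \<Longrightarrow> times_differentiable_on n S f"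
  by (induction n arbitrary: f) (auto simp: times_differentiable_on.simps(2))

lemma smooth_on_vderiv_on: "smooth_on S f \<Longrightarrow> smooth_on S (vderiv_on S f)"
  unfolding smooth_on_def by (metis times_differentiable_on.simps(2))

lemma smooth_on_has_vector_derivative:
  "smooth_on S f \<Longrightarrow> t \<in> S \<Longrightarrow> (f has_vector_derivative vderiv_on S f t) (at t within S)"
  unfolding smooth_on_def by (metis has_vector_derivative_vderiv_on)

lemma smooth_on_imp_continuous_on: "smooth_on S f \<Longrightarrow> continuous_on S f"
  unfolding continuous_on_eq_continuous_within
  using smooth_on_has_vector_derivative has_vector_derivative_continuous by blast

lemma times_differentiable_on_const:
  "no_isolated_points S \<Longrightarrow> times_differentiable_on n S (\<lambda>t. c)"
proof (induction n arbitrary: c)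
  case (Suc n)
  then show ?case by (intro times_differentiable_on_SucI[where f' = "\<lambda>t. 0"]) auto
qed simp

lemma times_differentiable_on_id:
  assumes S: "no_isolated_points S"
  shows "times_differentiable_on n S (\<lambda>t. t)"
proof (cases n)
  case (Suc m)
  show ?thesis unfolding Suc
    by (rule times_differentiable_on_SucI[OF S has_vector_derivative_id times_differentiable_on_const[OF S]])
qed simp

lemma times_differentiable_on_add:
  assumes S: "no_isolated_points S"
  shows "times_differentiable_on n S f \<Longrightarrow> times_differentiable_on n S g \<Longrightarrow>
           times_differentiable_on n S (\<lambda>t. f t + g t)"
proof (induction n arbitrary: f g)
  case (Suc n)
  have "((\<lambda>t. f t + g t) has_vector_derivative vderiv_on S f t + vderiv_on S g t) (at t within S)"
    if "t \<in> S" for t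
    using Suc.prems that by (intro has_vector_derivative_add has_vector_derivative_vderiv_on)
  moreover have "times_differentiable_on n S (\<lambda>t. vderiv_on S f t + vderiv_on S g t)"
    using Suc by (intro Suc.IH) (auto simp: times_differentiable_on.simps(2))
  ultimately show ?case by (rule times_differentiable_on_SucI[OF S])
qed simp

lemma times_differentiable_on_sum:
  fixes f :: "nat \<Rightarrow> real \<Rightarrow> 'a::real_normed_vector"
  shows "no_isolated_points S \<Longrightarrow> (\<And>k. k < M \<Longrightarrow> times_differentiable_on n S (f k)) \<Longrightarrow>
           times_differentiable_on n S (\<lambda>t. \<Sum>k<M. f k t)"
  by (induction M) (auto intro!: times_differentiable_on_add times_differentiable_on_const)

lemma times_differentiable_on_linear:
  assumes S: "no_isolated_points S" and L: "bounded_linear L"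
  shows "times_differentiable_on n S f \<Longrightarrow> times_differentiable_on n S (\<lambda>t. L (f t))"
proof (induction n arbitrary: f)
  case (Suc n)
  have "((\<lambda>t. L (f t)) has_vector_derivative L (vderiv_on S f t)) (at t within S)" if "t \<in> S" for t
    using Suc.prems that
    by (intro bounded_linear.has_vector_derivative[OF L] has_vector_derivative_vderiv_on)
  moreover have "times_differentiable_on n S (\<lambda>t. L (vderiv_on S f t))"
    using Suc by (intro Suc.IH) (auto simp: times_differentiable_on.simps(2))
  ultimately show ?case by (rule times_differentiable_on_SucI[OF S])
qed simp

lemma times_differentiable_on_mult:
  fixes f g :: "real \<Rightarrow> 'a::real_normed_algebra"
  assumes S: "no_isolated_points S"
  shows "times_differentiable_on n S f \<Longrightarrow> times_differentiable_on n S g \<Longrightarrow>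
           times_differentiable_on n S (\<lambda>t. f t * g t)"
proof (induction n arbitrary: f g)
  case (Suc n)
  have "((\<lambda>t. f t * g t) has_vector_derivative f t * vderiv_on S g t + vderiv_on S f t * g t)
          (at t within S)" if "t \<in> S" for t
    using Suc.prems that by (intro has_vector_derivative_mult has_vector_derivative_vderiv_on)
  moreover have "times_differentiable_on n S (\<lambda>t. f t * vderiv_on S g t + vderiv_on S f t * g t)"
    using Suc times_differentiable_on_Suc_D[of n S f] times_differentiable_on_Suc_D[of n S g]
    by (intro times_differentiable_on_add S Suc.IH) (auto simp: times_differentiable_on.simps(2))
  ultimately show ?case by (rule times_differentiable_on_SucI[OF S])
qed simp

lemma smooth_on_const: "no_isolated_points S \<Longrightarrow> smooth_on S (\<lambda>t. c)"
  by (simp add: smooth_on_def times_differentiable_on_const)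

lemma smooth_on_id: "no_isolated_points S \<Longrightarrow> smooth_on S (\<lambda>t. t)"
  by (simp add: smooth_on_def times_differentiable_on_id)

lemma smooth_on_add:
  "no_isolated_points S \<Longrightarrow> smooth_on S f \<Longrightarrow> smooth_on S g \<Longrightarrow> smooth_on S (\<lambda>t. f t + g t)"
  by (simp add: smooth_on_def times_differentiable_on_add)

lemma smooth_on_mult:
  fixes f g :: "real \<Rightarrow> 'a::real_normed_algebra"
  shows "no_isolated_points S \<Longrightarrow> smooth_on S f \<Longrightarrow> smooth_on S g \<Longrightarrow> smooth_on S (\<lambda>t. f t * g t)"
  by (simp add: smooth_on_def times_differentiable_on_mult)

lemma smooth_on_linear:
  "no_isolated_points S \<Longrightarrow> bounded_linear L \<Longrightarrow> smooth_on S f \<Longrightarrow> smooth_on S (\<lambda>t. L (f t))"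
  by (simp add: smooth_on_def times_differentiable_on_linear)

lemma smooth_on_of_real:
  "no_isolated_points S \<Longrightarrow> smooth_on S f \<Longrightarrow> smooth_on S (\<lambda>t. of_real (f t))"
  by (rule smooth_on_linear[OF _ bounded_linear_of_real])

lemma times_differentiable_on_compose:
  fixes F g :: "real \<Rightarrow> real"
  assumes S: "no_isolated_points S" and g: "smooth_on S g"
  shows "smooth_on UNIV F \<Longrightarrow> times_differentiable_on n S (\<lambda>t. F (g t))"
proof (induction n arbitrary: F)
  case (Suc n)
  have "((\<lambda>t. F (g t)) has_vector_derivative vderiv_on S g t * vderiv_on UNIV F (g t)) (at t within S)"
    if t: "t \<in> S" for t
  proof -
    have "(F has_field_derivative vderiv_on UNIV F (g t)) (at (g t))"
      using smooth_on_has_vector_derivative[OF Suc.prems, of "g t"]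
      by (simp add: has_real_derivative_iff_has_vector_derivative)
    then have "(F has_field_derivative vderiv_on UNIV F (g t)) (at (g t) within g ` S)"
      by (rule has_field_derivative_at_within)
    from field_vector_diff_chain_within[OF smooth_on_has_vector_derivative[OF g t] this]
    show ?thesis by (simp add: o_def)
  qed
  moreover have "times_differentiable_on n S (\<lambda>t. vderiv_on S g t * vderiv_on UNIV F (g t))"
    using Suc.IH[OF smooth_on_vderiv_on[OF Suc.prems]] smooth_on_vderiv_on[OF g]
    by (intro times_differentiable_on_mult S) (auto simp: smooth_on_def)
  ultimately show ?case by (rule times_differentiable_on_SucI[OF S])
qed simp

lemma smooth_on_compose:
  fixes F g :: "real \<Rightarrow> real"
  shows "no_isolated_points S \<Longrightarrow> smooth_on UNIV F \<Longrightarrow> smooth_on S g \<Longrightarrow> smooth_on S (\<lambda>t. F (g t))"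
  using times_differentiable_on_compose smooth_on_def by blast

lemma smooth_on_restrict_UNIV:
  fixes F :: "real \<Rightarrow> real"
  shows "no_isolated_points S \<Longrightarrow> smooth_on UNIV F \<Longrightarrow> smooth_on S F"
  using smooth_on_compose[OF _ _ smooth_on_id] by blast

lemma smooth_on_inverse:
  fixes h :: "real \<Rightarrow> 'a::real_normed_field"
  assumes S: "no_isolated_points S" and h: "smooth_on S h" and nz: "\<And>t. t \<in> S \<Longrightarrow> h t \<noteq> 0"
  shows "smooth_on S (\<lambda>t. inverse (h t))"
  unfolding smooth_on_def
proof
  fix n
  show "times_differentiable_on n S (\<lambda>t. inverse (h t))"
  proof (induction n)
    case (Suc n)
    have "((\<lambda>t. inverse (h t)) has_vector_derivative - (vderiv_on S h t * (inverse (h t) * inverse (h t))))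
            (at t within S)" if t: "t \<in> S" for t
      using field_vector_diff_chain_within[OF smooth_on_has_vector_derivative[OF h t] DERIV_inverse[OF nz[OF t]]]
      by (simp add: o_def power2_eq_square)
    moreover have "times_differentiable_on n S (\<lambda>t. - (vderiv_on S h t * (inverse (h t) * inverse (h t))))"
      using Suc.IH smooth_on_vderiv_on[OF h]
      by (intro times_differentiable_on_linear[OF S bounded_linear_minus[OF bounded_linear_ident]]
          times_differentiable_on_mult S) (auto simp: smooth_on_def)
    ultimately show ?case by (rule times_differentiable_on_SucI[OF S])
  qed simp
qed

lemma has_vector_derivative_transform_within_open_Int:
  assumes "(g has_vector_derivative D) (at x within S)" "open V" "x \<in> V" "x \<in> S"
    and "\<And>y. y \<in> S \<Longrightarrow> y \<in> V \<Longrightarrow> f y = g y"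
  shows "(f has_vector_derivative D) (at x within S)"
proof -
  obtain d where d: "d > 0" "ball x d \<subseteq> V" using assms(2,3) openE by blast
  show ?thesis
    by (rule has_vector_derivative_transform_within[OF assms(1) d(1) assms(4)])
       (use d assms(5) in \<open>metis mem_ball dist_commute subsetD\<close>)
qed

lemma times_differentiable_on_local:
  assumes S: "no_isolated_points S"
  shows "(\<And>t. t \<in> S \<Longrightarrow> \<exists>V g. open V \<and> t \<in> V \<and> times_differentiable_on n S g \<and> (\<forall>x\<in>S \<inter> V. f x = g x))
           \<Longrightarrow> times_differentiable_on n S f"
proof (induction n arbitrary: f)
  case (Suc n)
  have local_deriv: "\<exists>V g. open V \<and> t \<in> V \<and> times_differentiable_on n S (vderiv_on S g) \<and>
      (\<forall>x\<in>S \<inter> V. (f has_vector_derivative vderiv_on S g x) (at x within S))" if t: "t \<in> S" for t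
  proof -
    obtain V g where V: "open V" "t \<in> V" "times_differentiable_on (Suc n) S g" "\<forall>x\<in>S \<inter> V. f x = g x"
      using Suc.prems t by blast
    have "(f has_vector_derivative vderiv_on S g x) (at x within S)" if "x \<in> S \<inter> V" for x
    proof (rule has_vector_derivative_transform_within_open_Int)
      show "(g has_vector_derivative vderiv_on S g x) (at x within S)"
        using V(3) that by (intro has_vector_derivative_vderiv_on) auto
    qed (use V that in auto)
    then show ?thesis
      using V by (intro exI[of _ V] exI[of _ g]) (auto simp: times_differentiable_on.simps(2))
  qed
  have deriv: "(f has_vector_derivative vderiv_on S f t) (at t within S)" if t: "t \<in> S" for t
  proof -
    obtain V g where "t \<in> V" "\<forall>x\<in>S \<inter> V. (f has_vector_derivative vderiv_on S g x) (at x within S)"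
      using local_deriv[OF t] by blast
    then have "f differentiable (at t within S)"
      using t by (auto intro: differentiableI_vector)
    then show ?thesis unfolding vderiv_on_def by (rule vector_derivative_works[THEN iffD1])
  qed
  have "times_differentiable_on n S (vderiv_on S f)"
  proof (rule Suc.IH)
    fix t assume "t \<in> S"
    then obtain V g where V: "open V" "t \<in> V" "times_differentiable_on n S (vderiv_on S g)"
        "\<forall>x\<in>S \<inter> V. (f has_vector_derivative vderiv_on S g x) (at x within S)"
      using local_deriv by blast
    then show "\<exists>V g. open V \<and> t \<in> V \<and> times_differentiable_on n S g \<and> (\<forall>x\<in>S \<inter> V. vderiv_on S f x = g x)"
      using S by (intro exI[of _ V] exI[of _ "vderiv_on S g"]) (auto intro: vderiv_on_eqI)
  qed
  then show ?case using deriv by (blast intro: times_differentiable_on_SucI[OF S])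
qed simp

lemma smooth_net_iff_smooth_on: "smooth_net r \<longleftrightarrow> smooth_on Iset r"
proof
  assume "smooth_net r"
  then obtain D where D0: "D 0 = r"
    and D: "\<And>n t. t \<in> Iset \<Longrightarrow> (D n has_vector_derivative D (Suc n) t) (at t within Iset)"
    unfolding smooth_net_def by blast
  have "times_differentiable_on n Iset (D k)" for n k
  proof (induction n arbitrary: k)
    case (Suc n)
    show ?case by (rule times_differentiable_on_SucI[OF no_isolated_points_Iset D Suc.IH])
  qed simp
  then show "smooth_on Iset r" using D0 smooth_on_def by blast
next
  assume r: "smooth_on Iset r"
  define D where "D n = (vderiv_on Iset ^^ n) r" for n
  have "smooth_on Iset (D n)" for n
    by (induction n) (auto simp: D_def r intro: smooth_on_vderiv_on)
  then show "smooth_net r" unfolding smooth_net_def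
    by (intro exI[of _ D]) (auto simp: D_def intro: smooth_on_has_vector_derivative)
qed

section \<open>A flat function and a smooth bump\<close>

lemma poly_times_exp_neg_tendsto_0: "((\<lambda>x::real. poly p x * exp (- x)) \<longlongrightarrow> 0) at_top"
proof -
  have "((\<lambda>x::real. \<Sum>i\<le>degree p. coeff p i * (x ^ i / exp x)) \<longlongrightarrow> 0) at_top"
    by (rule tendsto_null_sum) (intro tendsto_mult_right_zero tendsto_power_div_exp_0)
  moreover have "poly p x * exp (- x) = (\<Sum>i\<le>degree p. coeff p i * (x ^ i / exp x))" for x
    by (simp add: poly_altdef sum_distrib_right exp_minus divide_inverse mult.assoc)
  ultimately show ?thesis by simp
qed

text \<open>\<open>flat_poly 1\<close> is the flat function \<open>exp (-1/t)\<close>, extended by \<open>0\<close> to \<open>t \<le> 0\<close>; the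
  polynomial factors are needed because they appear in its derivatives.\<close>

definition flat_poly :: "real poly \<Rightarrow> real \<Rightarrow> real" where
  "flat_poly p t = (if 0 < t then poly p (inverse t) * exp (- inverse t) else 0)"

lemma flat_poly_has_derivative_0: "(flat_poly p has_real_derivative 0) (at 0)"
proof -
  have "((\<lambda>y. poly (pCons 0 p) (inverse y) * exp (- inverse y)) \<longlongrightarrow> 0) (at_right (0::real))"
    by (rule filterlim_compose[OF poly_times_exp_neg_tendsto_0 filterlim_inverse_at_top_right])
  moreover have "\<forall>\<^sub>F y in at_right 0.
      poly (pCons 0 p) (inverse y) * exp (- inverse y) = (flat_poly p y - flat_poly p 0) / (y - 0)"
    by (auto simp: eventually_at_right_field flat_poly_def field_simps intro!: exI[of _ 1])
  ultimately have right: "((\<lambda>y. (flat_poly p y - flat_poly p 0) / (y - 0)) \<longlongrightarrow> 0) (at_right 0)"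
    by (rule Lim_transform_eventually)
  have "\<forall>\<^sub>F y in at_left 0. 0 = (flat_poly p y - flat_poly p 0) / (y - (0::real))"
    by (auto simp: eventually_at_left_field flat_poly_def intro!: exI[of _ "-1"])
  then have left: "((\<lambda>y. (flat_poly p y - flat_poly p 0) / (y - 0)) \<longlongrightarrow> 0) (at_left 0)"
    by (rule Lim_transform_eventually[rotated]) (rule tendsto_const)
  show ?thesis
    unfolding has_field_derivative_iff using filterlim_split_at[OF left right] by simp
qed

lemma flat_poly_has_derivative:
  "(flat_poly p has_real_derivative flat_poly (monom 1 2 * (p - pderiv p)) t) (at t)"
proof (cases t "0::real" rule: linorder_cases)
  case less
  have "(flat_poly p has_real_derivative 0) (at t)"
    by (rule has_field_derivative_transform_within_open[of "\<lambda>t. 0" _ _ "{..<0}"])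
       (use less in \<open>auto simp: flat_poly_def\<close>)
  then show ?thesis using less by (simp add: flat_poly_def)
next
  case equal
  then show ?thesis using flat_poly_has_derivative_0 by (simp add: flat_poly_def)
next
  case greater
  then have "t \<noteq> 0" by simp
  have "((\<lambda>t. poly p (inverse t) * exp (- inverse t)) has_real_derivative
      flat_poly (monom 1 2 * (p - pderiv p)) t) (at t)"
    by (rule DERIV_cong[OF DERIV_mult[OF DERIV_chain2[OF poly_DERIV DERIV_inverse[OF \<open>t \<noteq> 0\<close>]]
          DERIV_chain2[OF DERIV_exp DERIV_minus[OF DERIV_inverse[OF \<open>t \<noteq> 0\<close>]]]]])
       (use greater in \<open>simp add: flat_poly_def poly_monom algebra_simps power2_eq_square\<close>)
  then show ?thesis
    by (rule has_field_derivative_transform_within_open[of _ _ _ "{0<..}"])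
       (use greater in \<open>auto simp: flat_poly_def\<close>)
qed

lemma smooth_on_flat_poly: "smooth_on UNIV (flat_poly p)"
  unfolding smooth_on_def
proof
  fix n show "times_differentiable_on n UNIV (flat_poly p)"
  proof (induction n arbitrary: p)
    case (Suc n)
    show ?case
      using flat_poly_has_derivative Suc.IH
      by (intro times_differentiable_on_SucI[OF no_isolated_points_UNIV])
         (auto simp: has_real_derivative_iff_has_vector_derivative)
  qed simp
qed

definition bump :: "real \<Rightarrow> real" where
  "bump y = flat_poly 1 (1 - y) * flat_poly 1 (1 + y)"

lemma smooth_on_bump: "smooth_on UNIV bump"
proof -
  have "smooth_on UNIV (\<lambda>y. flat_poly 1 (1 + (-1) * y) * flat_poly 1 (1 + y))"
    by (intro smooth_on_mult smooth_on_compose[OF _ smooth_on_flat_poly] smooth_on_add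
        smooth_on_const smooth_on_id no_isolated_points_UNIV)
  then show ?thesis by (simp add: bump_def[abs_def])
qed

lemma bump_eq_0: "1 \<le> \<bar>y\<bar> \<Longrightarrow> bump y = 0"
  by (auto simp: bump_def flat_poly_def)

lemma bump_nonneg: "0 \<le> bump y" and bump_le_1: "bump y \<le> 1"
  by (auto simp: bump_def flat_poly_def mult_le_one)

lemma bump_0: "bump 0 = exp (- 2)"
  by (simp add: bump_def flat_poly_def flip: exp_add)

section \<open>Moderate and negligible nets\<close>

definition moderate_net :: "(real \<Rightarrow> 'a::real_normed_vector) \<Rightarrow> bool" where
  "moderate_net r \<longleftrightarrow> (\<exists>N C. \<forall>\<^sub>F e in at_right 0. norm (r e) \<le> C * (1 / e) ^ N)"

definition negligible_net :: "(real \<Rightarrow> 'a::real_normed_vector) \<Rightarrow> bool" where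
  "negligible_net r \<longleftrightarrow> (\<forall>m. \<exists>C. \<forall>\<^sub>F e in at_right 0. norm (r e) \<le> C * e ^ m)"

lemma eventually_at_right_0_iff:
  "eventually P (at_right (0::real)) \<longleftrightarrow> (\<exists>e0>0. \<forall>e. 0 < e \<and> e \<le> e0 \<longrightarrow> P e)"
proof
  assume "eventually P (at_right 0)"
  then obtain b where "b > 0" "\<forall>e>0. e < b \<longrightarrow> P e"
    by (auto simp: eventually_at_right_field)
  then show "\<exists>e0>0. \<forall>e. 0 < e \<and> e \<le> e0 \<longrightarrow> P e"
    by (intro exI[of _ "b / 2"]) auto
qed (auto simp: eventually_at_right_field)

lemma EM_sm_iff: "r \<in> EM_sm \<longleftrightarrow> smooth_on Iset r \<and> moderate_net r"
  unfolding EM_sm_def moderate_net_def eventually_at_right_0_iff smooth_net_iff_smooth_on by blast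

lemma N_sm_iff: "r \<in> N_sm \<longleftrightarrow> smooth_on Iset r \<and> negligible_net r"
  unfolding N_sm_def negligible_net_def eventually_at_right_0_iff smooth_net_iff_smooth_on by blast

lemma negligible_net_le:
  assumes "negligible_net g" and "\<forall>\<^sub>F e in at_right 0. norm (f e) \<le> norm (g e)"
  shows "negligible_net f"
  unfolding negligible_net_def
proof
  fix m
  obtain C where "\<forall>\<^sub>F e in at_right 0. norm (g e) \<le> C * e ^ m"
    using assms(1) negligible_net_def by blast
  with assms(2) have "\<forall>\<^sub>F e in at_right 0. norm (f e) \<le> C * e ^ m"
    by eventually_elim simp
  then show "\<exists>C. \<forall>\<^sub>F e in at_right 0. norm (f e) \<le> C * e ^ m" ..
qed

lemma negligible_net_diff:
  assumes "negligible_net f" "negligible_net g"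
  shows "negligible_net (\<lambda>e. f e - g e)"
  unfolding negligible_net_def
proof
  fix m
  obtain C1 C2 where "\<forall>\<^sub>F e in at_right 0. norm (f e) \<le> C1 * e ^ m"
    and "\<forall>\<^sub>F e in at_right 0. norm (g e) \<le> C2 * e ^ m"
    using assms negligible_net_def by blast
  then have "\<forall>\<^sub>F e in at_right 0. norm (f e - g e) \<le> (C1 + C2) * e ^ m"
    by eventually_elim (smt (verit) distrib_right norm_triangle_ineq4)
  then show "\<exists>C. \<forall>\<^sub>F e in at_right 0. norm (f e - g e) \<le> C * e ^ m" ..
qed

lemma negligible_net_mult:
  fixes f g :: "real \<Rightarrow> 'a::real_normed_algebra"
  assumes "moderate_net f" "negligible_net g"
  shows "negligible_net (\<lambda>e. f e * g e)"
  unfolding negligible_net_def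
proof
  fix m
  obtain N C1 where f: "\<forall>\<^sub>F e in at_right 0. norm (f e) \<le> C1 * (1 / e) ^ N"
    using assms(1) moderate_net_def by blast
  obtain C2 where g: "\<forall>\<^sub>F e in at_right 0. norm (g e) \<le> C2 * e ^ (m + N)"
    using assms(2) negligible_net_def by blast
  have "\<forall>\<^sub>F e in at_right (0::real). 0 < e"
    by (simp add: eventually_at_right_less)
  with f g have "\<forall>\<^sub>F e in at_right 0. norm (f e * g e) \<le> (C1 * C2) * e ^ m"
  proof eventually_elim
    case (elim e)
    have "norm (f e * g e) \<le> norm (f e) * norm (g e)"
      by (rule norm_mult_ineq)
    also have "\<dots> \<le> (C1 * (1 / e) ^ N) * (C2 * e ^ (m + N))"
      using elim by (intro mult_mono) (auto intro: order_trans[OF norm_ge_zero])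
    also have "\<dots> = (C1 * C2) * e ^ m"
      using elim by (simp add: power_add power_divide field_simps)
    finally show ?case .
  qed
  then show "\<exists>C. \<forall>\<^sub>F e in at_right 0. norm (f e * g e) \<le> C * e ^ m" ..
qed

lemma negligible_net_flat_poly: "negligible_net (flat_poly p)"
  unfolding negligible_net_def
proof
  fix m
  have "((\<lambda>e. poly (monom 1 m * p) (inverse e) * exp (- inverse e)) \<longlongrightarrow> 0) (at_right (0::real))"
    by (rule filterlim_compose[OF poly_times_exp_neg_tendsto_0 filterlim_inverse_at_top_right])
  then have "\<forall>\<^sub>F e in at_right 0. dist (poly (monom 1 m * p) (inverse e) * exp (- inverse e)) 0 < 1"
    by (rule tendstoD) simp
  moreover have "\<forall>\<^sub>F e in at_right (0::real). 0 < e"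
    by (simp add: eventually_at_right_less)
  ultimately have "\<forall>\<^sub>F e in at_right 0. norm (flat_poly p e) \<le> 1 * e ^ m"
  proof eventually_elim
    case (elim e)
    then have "inverse e ^ m * \<bar>flat_poly p e\<bar> < 1"
      by (simp add: flat_poly_def poly_monom abs_mult mult.assoc dist_real_def)
    then show ?case
      using elim(2) by (simp add: field_simps power_inverse)
  qed
  then show "\<exists>C. \<forall>\<^sub>F e in at_right 0. norm (flat_poly p e) \<le> C * e ^ m" ..
qed

section \<open>Invertibility and zero divisors\<close>

lemma not_zero_divisor_if_invertible_sm:
  fixes r :: "real \<Rightarrow> 'a::real_normed_field"
  assumes "invertible_sm r"
  shows "\<not> zero_divisor_sm r"
proof
  assume "zero_divisor_sm r"
  then obtain s where s: "s \<in> EM_sm" "s \<notin> N_sm" and rs: "(\<lambda>e. r e * s e) \<in> N_sm"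
    unfolding zero_divisor_sm_def by blast
  obtain s' where s': "s' \<in> EM_sm" and rs': "(\<lambda>e. r e * s' e - 1) \<in> N_sm"
    using assms unfolding invertible_sm_def by blast
  have "s e = s' e * (r e * s e) - s e * (r e * s' e - 1)" for e
    by (simp add: algebra_simps)
  moreover have "negligible_net (\<lambda>e. s' e * (r e * s e) - s e * (r e * s' e - 1))"
    by (rule negligible_net_diff[OF negligible_net_mult negligible_net_mult])
       (use s s' rs rs' in \<open>auto simp: EM_sm_iff N_sm_iff\<close>)
  ultimately have "s \<in> N_sm"
    using s(1) by (simp add: EM_sm_iff N_sm_iff)
  with s(2) show False ..
qed

lemma regularized_inverse_bounds:
  fixes x c :: "'a::real_normed_field"
  assumes conj: "c * x = of_real (norm x ^ 2)" and a: "0 < a" "a \<le> norm x" and d: "0 < d"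
  shows "norm (c * inverse (of_real (norm x ^ 2 + d))) \<le> 1 / a"
    and "norm (x * (c * inverse (of_real (norm x ^ 2 + d))) - 1) \<le> d * (1 / a) ^ 2"
proof -
  have x: "0 < norm x" using a by linarith
  have "norm c * norm x = norm x * norm x"
    using arg_cong[OF conj, of norm] by (simp add: norm_mult power2_eq_square)
  then have norm_c: "norm c = norm x" using x by simp
  have "norm (c * inverse (of_real (norm x ^ 2 + d))) = norm x / (norm x ^ 2 + d)"
    using d by (simp add: norm_mult norm_inverse norm_c divide_inverse del: of_real_add of_real_power)
  also have "\<dots> \<le> norm x / norm x ^ 2"
    using x d by (intro divide_left_mono) (auto intro!: mult_pos_pos add_pos_pos)
  also have "\<dots> \<le> 1 / a"
    using x a by (simp add: power2_eq_square divide_simps)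
  finally show "norm (c * inverse (of_real (norm x ^ 2 + d))) \<le> 1 / a" .
  have "x * (c * inverse (of_real (norm x ^ 2 + d))) = of_real (norm x ^ 2 / (norm x ^ 2 + d))"
    by (simp add: mult.assoc[symmetric] mult.commute[of x] conj divide_inverse
        del: of_real_add of_real_power)
  also have "norm x ^ 2 / (norm x ^ 2 + d) = 1 - d / (norm x ^ 2 + d)"
    using add_pos_nonneg[OF d, of "norm x ^ 2"] by (simp add: field_split_simps)
  finally have "x * (c * inverse (of_real (norm x ^ 2 + d))) - 1 = - of_real (d / (norm x ^ 2 + d))"
    by simp
  then have "norm (x * (c * inverse (of_real (norm x ^ 2 + d))) - 1) = d / (norm x ^ 2 + d)"
    using d by (simp del: of_real_add of_real_power of_real_divide)
  also have "\<dots> \<le> d / a ^ 2"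
    using x a d by (intro divide_left_mono add_increasing2 power_mono) (auto intro!: mult_pos_pos add_pos_pos)
  finally show "norm (x * (c * inverse (of_real (norm x ^ 2 + d))) - 1) \<le> d * (1 / a) ^ 2"
    by (simp add: power_divide)
qed

lemma smooth_on_regularized_inverse:
  fixes r :: "real \<Rightarrow> 'a::real_normed_field" and cj :: "'a \<Rightarrow> 'a"
  assumes cj: "bounded_linear cj" "\<And>x. cj x * x = of_real (norm x ^ 2)" and r: "smooth_on Iset r"
  shows "smooth_on Iset (\<lambda>t. cj (r t) * inverse (cj (r t) * r t + of_real (flat_poly 1 t)))"
  using no_isolated_points_Iset
proof (intro smooth_on_mult smooth_on_inverse smooth_on_add smooth_on_linear[OF _ cj(1)]
    smooth_on_of_real smooth_on_restrict_UNIV[OF _ smooth_on_flat_poly] r)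
  show "cj (r t) * r t + of_real (flat_poly 1 t) \<noteq> 0" if "t \<in> Iset" for t
  proof -
    have "0 < norm (r t) ^ 2 + flat_poly 1 t"
      using that by (simp add: Iset_def flat_poly_def add_nonneg_pos)
    moreover have "cj (r t) * r t + of_real (flat_poly 1 t) = of_real (norm (r t) ^ 2 + flat_poly 1 t)"
      by (simp only: cj(2) of_real_add)
    ultimately show ?thesis by (metis less_irrefl of_real_eq_0_iff)
  qed
qed

lemma invertible_sm_if_bounded_below:
  fixes r :: "real \<Rightarrow> 'a::real_normed_field" and cj :: "'a \<Rightarrow> 'a"
  assumes cj: "bounded_linear cj" "\<And>x. cj x * x = of_real (norm x ^ 2)"
    and r: "r \<in> EM_sm" and below: "\<forall>\<^sub>F e in at_right 0. e ^ m \<le> norm (r e)"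
  shows "invertible_sm r"
proof -
  define s where "s t = cj (r t) * inverse (cj (r t) * r t + of_real (flat_poly 1 t))" for t
  have flat_pos: "0 < flat_poly 1 t" if "0 < t" for t
    using that by (simp add: flat_poly_def)
  have s_eq: "s t = cj (r t) * inverse (of_real (norm (r t) ^ 2 + flat_poly 1 t))" for t
    by (simp add: s_def cj(2))
  have smooth_r: "smooth_on Iset r"
    using r EM_sm_iff by blast
  have "smooth_on Iset s"
    unfolding s_def[abs_def] by (rule smooth_on_regularized_inverse[OF cj smooth_r])
  then have smooth_rs: "smooth_on Iset (\<lambda>e. r e * s e - 1)"
    using smooth_on_add[OF no_isolated_points_Iset smooth_on_mult[OF no_isolated_points_Iset smooth_r]
        smooth_on_const[OF no_isolated_points_Iset, of "- 1"]] by simp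
  have "\<forall>\<^sub>F e in at_right (0::real). 0 < e"
    by (simp add: eventually_at_right_less)
  with below have bounds: "\<forall>\<^sub>F e in at_right 0. norm (s e) \<le> 1 * (1 / e) ^ m \<and>
      norm (r e * s e - 1) \<le> norm ((1 / e) ^ (2 * m) * flat_poly 1 e)"
  proof eventually_elim
    case (elim e)
    then show ?case
      using regularized_inverse_bounds[OF cj(2) _ elim(1) flat_pos, of e]
      by (simp add: s_eq power_divide power_mult abs_mult flat_pos less_imp_le[OF flat_pos]
          power2_eq_square power_mult_distrib)
  qed
  have "\<forall>\<^sub>F e in at_right 0. norm (s e) \<le> 1 * (1 / e) ^ m"
    using bounds by (rule eventually_mono) blast
  then have "moderate_net s"
    unfolding moderate_net_def by blast
  moreover have "negligible_net (\<lambda>e. r e * s e - 1)"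
  proof (rule negligible_net_le[OF negligible_net_mult[OF _ negligible_net_flat_poly]])
    show "moderate_net (\<lambda>e::real. (1 / e) ^ (2 * m))"
      unfolding moderate_net_def by (rule exI[of _ "2 * m"], rule exI[of _ 1]) simp
    show "\<forall>\<^sub>F e in at_right 0. norm (r e * s e - 1) \<le> norm ((1 / e) ^ (2 * m) * flat_poly 1 e)"
      using bounds by (rule eventually_mono) blast
  qed
  ultimately have "s \<in> EM_sm" "(\<lambda>e. r e * s e - 1) \<in> N_sm"
    using \<open>smooth_on Iset s\<close> smooth_rs by (simp_all add: EM_sm_iff N_sm_iff)
  then show ?thesis
    unfolding invertible_sm_def by blast
qed

lemma small_interval_exists:
  fixes r :: "real \<Rightarrow> 'a::real_normed_vector"
  assumes r: "continuous_on Iset r" and small: "\<exists>\<^sub>F e in at_right 0. norm (r e) < e ^ k"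
    and b: "0 < b"
  shows "\<exists>c w. 0 < w \<and> 0 < c - w \<and> c + w < b \<and> (\<forall>t. \<bar>t - c\<bar> < w \<longrightarrow> norm (r t) < t ^ k)"
proof -
  have "\<forall>\<^sub>F e in at_right 0. 0 < e \<and> e < min (b / 2) (1 / 2)"
    using b by (auto simp: eventually_at_right_field intro!: exI[of _ "min (b / 2) (1 / 2)"])
  from frequently_ex[OF frequently_eventually_conj[OF small this]]
  obtain e where e: "0 < e" "e < min (b / 2) (1 / 2)" "norm (r e) < e ^ k"
    by blast
  then have "e \<in> Iset" by (simp add: Iset_def)
  with r have "continuous (at e within Iset) (\<lambda>t. norm (r t) - t ^ k)"
    by (intro continuous_intros) (simp add: continuous_on_eq_continuous_within)
  then obtain d where d: "d > 0" and near: "\<And>t. t \<in> Iset \<Longrightarrow> dist t e < d \<Longrightarrow>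
      dist (norm (r t) - t ^ k) (norm (r e) - e ^ k) < e ^ k - norm (r e)"
    using e(3) unfolding continuous_within_eps_delta by (meson diff_gt_0_iff_gt)
  have "norm (r t) < t ^ k" if t: "\<bar>t - e\<bar> < min d (e / 2)" for t
  proof -
    have "\<bar>t - e\<bar> < d" "\<bar>t - e\<bar> < e / 2"
      using t by auto
    then have "dist t e < d" "e / 2 < t" "t < 3 * e / 2"
      unfolding dist_real_def by arith+
    then have "t \<in> Iset" "dist t e < d"
      using e(2) by (auto simp: Iset_def)
    from near[OF this] show ?thesis by (simp add: dist_real_def)
  qed
  moreover have "0 < min d (e / 2)" "0 < e - min d (e / 2)" "e + min d (e / 2) < b"
    using d e by auto
  ultimately show ?thesis by blast
qed

lemma nested_small_intervals_exist:
  fixes r :: "real \<Rightarrow> 'a::real_normed_vector"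
  assumes r: "continuous_on Iset r" and small: "\<And>k. \<exists>\<^sub>F e in at_right 0. norm (r e) < e ^ k"
  shows "\<exists>c w. \<forall>k. 0 < w k \<and> 0 < c k - w k \<and> c k + w k < 1 / (real k + 1) \<and>
           c (Suc k) + w (Suc k) \<le> c k - w k \<and> (\<forall>t. \<bar>t - c k\<bar> < w k \<longrightarrow> norm (r t) < t ^ k)"
proof -
  define P where "P k cw \<longleftrightarrow> 0 < snd cw \<and> 0 < fst cw - snd cw \<and> fst cw + snd cw < 1 / (real k + 1) \<and>
      (\<forall>t. \<bar>t - fst cw\<bar> < snd cw \<longrightarrow> norm (r t) < t ^ k)" for k cw
  have "\<exists>cw. P k cw \<and> fst cw + snd cw < b" if "0 < b" for k b
    using small_interval_exists[OF r small, of "min b (1 / (real k + 1))" k] that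
    by (auto simp: P_def)
  then have "\<exists>cw'. P (Suc k) cw' \<and> fst cw' + snd cw' \<le> fst cw - snd cw" if "P k cw" for k cw
    using that by (metis P_def less_imp_le)
  with dependent_nat_choice[of P "\<lambda>k cw cw'. fst cw' + snd cw' \<le> fst cw - snd cw"]
    \<open>\<And>k b. 0 < b \<Longrightarrow> \<exists>cw. P k cw \<and> fst cw + snd cw < b\<close>[of 1 0]
  obtain cw where "\<forall>k. P k (cw k) \<and> fst (cw (Suc k)) + snd (cw (Suc k)) \<le> fst (cw k) - snd (cw k)"
    by auto
  then show ?thesis
    unfolding P_def by (intro exI[of _ "\<lambda>k. fst (cw k)"] exI[of _ "\<lambda>k. snd (cw k)"]) blast
qed

locale nested_intervals =
  fixes c w :: "nat \<Rightarrow> real"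
  assumes radius_pos: "0 < w k"
    and left_end_pos: "0 < c k - w k"
    and right_end_less: "c k + w k < 1 / (real k + 1)"
    and nested: "c (Suc k) + w (Suc k) \<le> c k - w k"
begin

lemma right_end_le_left_end: "j < k \<Longrightarrow> c k + w k \<le> c j - w j"
proof (induction k)
  case (Suc k)
  then show ?case
    using nested[of k] radius_pos[of k] by (cases "j = k") (auto simp: less_Suc_eq)
qed simp

lemma intervals_disjoint:
  assumes "\<bar>t - c j\<bar> < w j" "\<bar>t - c k\<bar> < w k"
  shows "j = k"
  using right_end_le_left_end[of j k] right_end_le_left_end[of k j] assms
  by (cases j k rule: linorder_cases) auto

definition bump_series :: "real \<Rightarrow> real" where
  "bump_series t = (\<Sum>k. bump ((t - c k) / w k))"

lemma bump_term_eq_0: "w k \<le> \<bar>t - c k\<bar> \<Longrightarrow> bump ((t - c k) / w k) = 0"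
  using radius_pos[of k] by (intro bump_eq_0) (simp add: abs_divide)

lemma bump_series_eq:
  assumes "\<bar>t - c k\<bar> < w k"
  shows "bump_series t = bump ((t - c k) / w k)"
proof -
  have "bump_series t = (\<Sum>j\<in>{k}. bump ((t - c j) / w j))"
    unfolding bump_series_def
  proof (rule suminf_finite)
    fix j assume "j \<notin> {k}"
    then have "w j \<le> \<bar>t - c j\<bar>"
      using intervals_disjoint[OF _ assms, of j] by force
    then show "bump ((t - c j) / w j) = 0" by (rule bump_term_eq_0)
  qed simp
  then show ?thesis by simp
qed

lemma bump_series_eq_0: "(\<And>k. w k \<le> \<bar>t - c k\<bar>) \<Longrightarrow> bump_series t = 0"
  by (simp add: bump_series_def bump_term_eq_0)

lemma bump_series_center: "bump_series (c k) = exp (- 2)"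
  using bump_series_eq[of "c k" k] radius_pos[of k] by (simp add: bump_0)

lemma abs_bump_series_le_1: "\<bar>bump_series t\<bar> \<le> 1"
  using bump_series_eq bump_series_eq_0 bump_nonneg bump_le_1
  by (cases "\<exists>k. \<bar>t - c k\<bar> < w k") (auto simp: not_less)

lemma smooth_on_bump_series: "smooth_on Iset bump_series"
  unfolding smooth_on_def
proof
  fix n
  have term_smooth: "smooth_on Iset (\<lambda>t. bump ((t - c k) / w k))" for k
  proof -
    have "smooth_on Iset (\<lambda>t. bump (t / w k + (- c k / w k)))"
      by (intro smooth_on_compose[OF _ smooth_on_bump] smooth_on_add smooth_on_const
          smooth_on_linear[OF _ bounded_linear_divide] smooth_on_id no_isolated_points_Iset)
    then show ?thesis by (simp add: diff_divide_distrib)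
  qed
  show "times_differentiable_on n Iset bump_series"
  proof (rule times_differentiable_on_local[OF no_isolated_points_Iset])
    fix t0 assume "t0 \<in> Iset"
    then have "0 < t0 / 2" by (simp add: Iset_def)
    then obtain M where M: "inverse (real (Suc M)) < t0 / 2"
      using reals_Archimedean by blast
    have "bump_series t = (\<Sum>k<M. bump ((t - c k) / w k))" if t: "t0 / 2 < t" for t
      unfolding bump_series_def
    proof (rule suminf_finite)
      fix k assume "k \<notin> {..<M}"
      then have "1 / (real k + 1) \<le> inverse (real (Suc M))"
        by (auto simp: field_simps)
      then show "bump ((t - c k) / w k) = 0"
        using t M right_end_less[of k] by (intro bump_term_eq_0) auto
    qed simp
    then show "\<exists>V g. open V \<and> t0 \<in> V \<and> times_differentiable_on n Iset g \<and>
        (\<forall>t\<in>Iset \<inter> V. bump_series t = g t)"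
      using \<open>0 < t0 / 2\<close> term_smooth
      by (intro exI[of _ "{t0 / 2<..}"] exI[of _ "\<lambda>t. \<Sum>k<M. bump ((t - c k) / w k)"])
         (auto intro!: times_differentiable_on_sum no_isolated_points_Iset simp: smooth_on_def)
  qed
qed

lemma centers_pos: "0 < c k"
  using left_end_pos[of k] radius_pos[of k] by linarith

lemma centers_tendsto_0: "c \<longlonglongrightarrow> 0"
proof (rule tendsto_sandwich[OF _ _ tendsto_const LIMSEQ_inverse_real_of_nat])
  have "c k \<le> inverse (real (Suc k))" for k
    using radius_pos[of k] right_end_less[of k] by (simp add: inverse_eq_divide add.commute)
  then show "\<forall>\<^sub>F k in sequentially. 0 \<le> c k" "\<forall>\<^sub>F k in sequentially. c k \<le> inverse (real (Suc k))"
    using centers_pos by (auto intro!: always_eventually less_imp_le)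
qed

lemma not_negligible_net_bump_series:
  "\<not> negligible_net (\<lambda>t. of_real (bump_series t) :: 'a::real_normed_algebra_1)"
proof
  assume "negligible_net (\<lambda>t. of_real (bump_series t) :: 'a)"
  then obtain C where C: "\<forall>\<^sub>F e in at_right 0. \<bar>bump_series e\<bar> \<le> C * e"
    unfolding negligible_net_def by (auto dest: spec[of _ 1])
  have "filterlim c (at_right 0) sequentially"
    using centers_tendsto_0 centers_pos by (intro tendsto_imp_filterlim_at_right always_eventually) auto
  with C have "\<forall>\<^sub>F k in sequentially. \<bar>bump_series (c k)\<bar> \<le> C * c k"
    by (rule eventually_compose_filterlim)
  moreover have "\<forall>\<^sub>F k in sequentially. C * c k < exp (- 2)"
    using centers_tendsto_0 by (intro order_tendstoD(2)[of _ 0]) (auto intro: tendsto_mult_right_zero)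
  ultimately have "\<forall>\<^sub>F k in sequentially. False"
    by eventually_elim (simp add: bump_series_center)
  then show False by simp
qed

lemma negligible_net_mult_bump_series:
  fixes r :: "real \<Rightarrow> 'a::real_normed_field"
  assumes small: "\<And>k t. \<bar>t - c k\<bar> < w k \<Longrightarrow> norm (r t) < t ^ k"
  shows "negligible_net (\<lambda>t. r t * of_real (bump_series t))"
  unfolding negligible_net_def
proof
  fix m
  have "\<forall>\<^sub>F e in at_right 0. 0 < e \<and> e < c m + w m"
    using centers_pos[of m] radius_pos[of m]
    by (auto simp: eventually_at_right_field intro!: exI[of _ "c m + w m"])
  then have "\<forall>\<^sub>F e in at_right 0. norm (r e * of_real (bump_series e)) \<le> 1 * e ^ m"
  proof eventually_elim
    case (elim e)
    show ?case
    proof (cases "\<exists>k. \<bar>e - c k\<bar> < w k")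
      case True
      then obtain k where k: "\<bar>e - c k\<bar> < w k" ..
      have "m \<le> k"
        using right_end_le_left_end[of k m] elim k by (cases "k < m") (auto simp: abs_less_iff)
      have "e \<le> 1"
        using elim right_end_less[of m] by (smt (verit) divide_le_eq_1 of_nat_0_le_iff)
      have "norm (r e * of_real (bump_series e)) = norm (r e) * bump ((e - c k) / w k)"
        by (simp add: bump_series_eq[OF k] norm_mult bump_nonneg)
      also have "\<dots> \<le> norm (r e)"
        by (intro mult_left_le bump_le_1 bump_nonneg norm_ge_zero)
      also have "\<dots> \<le> e ^ k"
        using small[OF k] by simp
      also have "\<dots> \<le> e ^ m"
        using elim \<open>e \<le> 1\<close> \<open>m \<le> k\<close> by (intro power_decreasing) auto
      finally show ?thesis by simp
    next
      case False
      then show ?thesis using elim by (simp add: bump_series_eq_0 not_less)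
    qed
  qed
  then show "\<exists>C. \<forall>\<^sub>F e in at_right 0. norm (r e * of_real (bump_series e)) \<le> C * e ^ m" ..
qed

end

lemma zero_divisor_sm_if_not_bounded_below:
  fixes r :: "real \<Rightarrow> 'a::real_normed_field"
  assumes r: "r \<in> EM_sm" and small: "\<And>k. \<exists>\<^sub>F e in at_right 0. norm (r e) < e ^ k"
  shows "zero_divisor_sm r"
proof -
  have smooth_r: "smooth_on Iset r"
    using r EM_sm_iff by blast
  obtain c w where cw: "\<And>k. 0 < w k" "\<And>k. 0 < c k - w k" "\<And>k. c k + w k < 1 / (real k + 1)"
      "\<And>k. c (Suc k) + w (Suc k) \<le> c k - w k"
    and r_small: "\<And>k t. \<bar>t - c k\<bar> < w k \<Longrightarrow> norm (r t) < t ^ k"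
    using nested_small_intervals_exist[OF smooth_on_imp_continuous_on[OF smooth_r] small] by metis
  interpret nested_intervals c w
    using cw by unfold_locales
  define s :: "real \<Rightarrow> 'a" where "s t = of_real (bump_series t)" for t
  have smooth_s: "smooth_on Iset s"
    unfolding s_def[abs_def] by (intro smooth_on_of_real no_isolated_points_Iset smooth_on_bump_series)
  have "\<forall>\<^sub>F e in at_right 0. norm (s e) \<le> 1 * (1 / e) ^ 0"
    by (intro always_eventually allI) (simp add: s_def abs_bump_series_le_1)
  then have "s \<in> EM_sm"
    using smooth_s unfolding EM_sm_iff moderate_net_def by blast
  moreover have "s \<notin> N_sm"
    using not_negligible_net_bump_series[where 'a = 'a] by (simp add: N_sm_iff s_def[abs_def])
  moreover have "(\<lambda>e. r e * s e) \<in> N_sm"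
    using smooth_on_mult[OF no_isolated_points_Iset smooth_r smooth_s]
      negligible_net_mult_bump_series[OF r_small]
    by (simp add: N_sm_iff s_def)
  ultimately show ?thesis
    unfolding zero_divisor_sm_def by blast
qed

text \<open>\<open>cj\<close> plays the role of complex conjugation, and of the identity over \<open>\<real>\<close>.\<close>

lemma not_invertible_sm_iff_zero_divisor_sm:
  fixes r :: "real \<Rightarrow> 'a::real_normed_field" and cj :: "'a \<Rightarrow> 'a"
  assumes cj: "bounded_linear cj" "\<And>x. cj x * x = of_real (norm x ^ 2)" and r: "r \<in> EM_sm"
  shows "\<not> invertible_sm r \<longleftrightarrow> zero_divisor_sm r"
proof
  assume "\<not> invertible_sm r"
  then have "\<not> (\<forall>\<^sub>F e in at_right 0. e ^ k \<le> norm (r e))" for k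
    using invertible_sm_if_bounded_below[OF cj r] by blast
  then have "\<exists>\<^sub>F e in at_right 0. norm (r e) < e ^ k" for k
    by (simp add: not_eventually not_le)
  then show "zero_divisor_sm r"
    by (rule zero_divisor_sm_if_not_bounded_below[OF r])
qed (use not_zero_divisor_if_invertible_sm in blast)

theorem proposition4p1:
  shows "(\<forall>r :: real \<Rightarrow> real. r \<in> EM_sm \<longrightarrow> (\<not> invertible_sm r \<longleftrightarrow> zero_divisor_sm r)) \<and>
         (\<forall>r :: real \<Rightarrow> complex. r \<in> EM_sm \<longrightarrow> (\<not> invertible_sm r \<longleftrightarrow> zero_divisor_sm r))"
proof (intro conjI allI impI)
  fix r :: "real \<Rightarrow> real"
  assume r: "r \<in> EM_sm"
  show "\<not> invertible_sm r \<longleftrightarrow> zero_divisor_sm r"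
    by (rule not_invertible_sm_iff_zero_divisor_sm[OF bounded_linear_ident _ r])
       (simp add: power2_eq_square)
next
  fix r :: "real \<Rightarrow> complex"
  assume r: "r \<in> EM_sm"
  show "\<not> invertible_sm r \<longleftrightarrow> zero_divisor_sm r"
    by (rule not_invertible_sm_iff_zero_divisor_sm[OF bounded_linear_cnj _ r])
       (metis complex_norm_square mult.commute)
qed

end
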